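(* Let $G=(V,\mathcal E)$ be an undirected loopless graph and $(V_j)_{j\in J}$ a partition of $V$ into non-empty sets. Then $(V_j)_{j\in J}$ is a monomorphic decomposition of $G$ if and only if each induced subgraph $G_{\restriction V_j}$ is a clique or an independent set and $G$ is the lexicographic sum of the graphs $G_{\restriction V_j}$ indexed by some graph $H$ on $J$. In particular, $G$ has a monomorphic decomposition into finitely many classes if and only if $G$ is a lexicographic sum of cliques or independent sets indexed by a finite graph.
   Context: A monomorphic decomposition of a graph $G$ with vertex set $V$ is a partition $(V_j)_{j\in J}$ of $V$ into non-empty sets such that for all finite $F,F'\subseteq V$ with $|F\cap V_j|=|F'\cap V_j|$ for every $j\in J$, the induced subgraphs $G_{\restriction F}$ and $G_{\restriction F'}$ are isomorphic. If $H$ is a graph on a vertex set $J$ and $(L_j)_{j\in J}$ are graphs, the lexicographic sum of the $L_j$ indexed by $H$ is the graph on the disjoint union of the vertex sets of the $L_j$ in which two vertices of the same $L_j$ are adjacent iff they are adjacent in $L_j$, and $x\in L_i$, $y\in L_j$ with $i\neq j$ are adjacent iff $\{i,j\}$ is an edge of $H$. *)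

theory Defs
  imports Main
begin

text \<open>An undirected loopless graph on vertex set V, given by an edge relation E
  (only its restriction to V matters).\<close>
definition ugraph :: "'a set \<Rightarrow> ('a \<Rightarrow> 'a \<Rightarrow> bool) \<Rightarrow> bool" where
  "ugraph V E \<longleftrightarrow> (\<forall>x\<in>V. \<forall>y\<in>V. E x y \<longleftrightarrow> E y x) \<and> (\<forall>x\<in>V. \<not> E x x)"

definition is_partition :: "'a set \<Rightarrow> 'j set \<Rightarrow> ('j \<Rightarrow> 'a set) \<Rightarrow> bool" where
  "is_partition V J P \<longleftrightarrow>
     (\<forall>j\<in>J. P j \<noteq> {}) \<and>
     (\<forall>i\<in>J. \<forall>j\<in>J. i \<noteq> j \<longrightarrow> P i \<inter> P j = {}) \<and>
     (\<Union>j\<in>J. P j) = V"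

definition induced_iso :: "('a \<Rightarrow> 'a \<Rightarrow> bool) \<Rightarrow> 'a set \<Rightarrow> 'a set \<Rightarrow> bool" where
  "induced_iso E F F' \<longleftrightarrow>
     (\<exists>f. bij_betw f F F' \<and> (\<forall>x\<in>F. \<forall>y\<in>F. E x y \<longleftrightarrow> E (f x) (f y)))"

definition monomorphic_decomposition ::
  "'a set \<Rightarrow> ('a \<Rightarrow> 'a \<Rightarrow> bool) \<Rightarrow> 'j set \<Rightarrow> ('j \<Rightarrow> 'a set) \<Rightarrow> bool" where
  "monomorphic_decomposition V E J P \<longleftrightarrow>
     is_partition V J P \<and>
     (\<forall>F F'. finite F \<and> finite F' \<and> F \<subseteq> V \<and> F' \<subseteq> V \<and>
        (\<forall>j\<in>J. card (F \<inter> P j) = card (F' \<inter> P j)) \<longrightarrow> induced_iso E F F')"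

definition clique_or_independent :: "('a \<Rightarrow> 'a \<Rightarrow> bool) \<Rightarrow> 'a set \<Rightarrow> bool" where
  "clique_or_independent E A \<longleftrightarrow>
     (\<forall>x\<in>A. \<forall>y\<in>A. x \<noteq> y \<longrightarrow> E x y) \<or> (\<forall>x\<in>A. \<forall>y\<in>A. \<not> E x y)"

text \<open>G = (V,E) is the lexicographic sum of the induced subgraphs G|P j indexed by
  the graph H on J (the partition being (P j)_{j\<in>J}): vertices in the same part are
  adjacent as in G (automatic), vertices in distinct parts i, j are adjacent iff
  {i,j} is an edge of H.\<close>
definition is_lex_sum ::
  "'a set \<Rightarrow> ('a \<Rightarrow> 'a \<Rightarrow> bool) \<Rightarrow> 'j set \<Rightarrow> ('j \<Rightarrow> 'a set) \<Rightarrow> ('j \<Rightarrow> 'j \<Rightarrow> bool) \<Rightarrow> bool" where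
  "is_lex_sum V E J P H \<longleftrightarrow>
     ugraph J H \<and>
     (\<forall>i\<in>J. \<forall>j\<in>J. i \<noteq> j \<longrightarrow> (\<forall>x\<in>P i. \<forall>y\<in>P j. E x y \<longleftrightarrow> H i j))"

end

theory Submission
  imports Defs "HOL-Library.Disjoint_Sets"
begin

text \<open>Both conditions say that adjacency of two distinct vertices depends only on the
  classes containing them. For a monomorphic decomposition this follows by comparing
  two-element sets with the same class profile. Conversely, if adjacency depends only
  on classes, then two finite sets with the same profile are matched by gluing
  bijections class by class, and such a class-preserving bijection is an isomorphism.\<close>

definition edges_determined_by_parts ::
  "('a \<Rightarrow> 'a \<Rightarrow> bool) \<Rightarrow> 'j set \<Rightarrow> ('j \<Rightarrow> 'a set) \<Rightarrow> bool" where
  "edges_determined_by_parts E J P \<longleftrightarrow>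
     (\<forall>i\<in>J. \<forall>j\<in>J. \<forall>x\<in>P i. \<forall>x'\<in>P i. \<forall>y\<in>P j. \<forall>y'\<in>P j.
        x \<noteq> y \<longrightarrow> x' \<noteq> y' \<longrightarrow> (E x y \<longleftrightarrow> E x' y'))"

lemma is_partition_subset:
  "is_partition V J P \<Longrightarrow> j \<in> J \<Longrightarrow> P j \<subseteq> V"
  unfolding is_partition_def by blast

lemma is_partition_part_unique:
  "is_partition V J P \<Longrightarrow> i \<in> J \<Longrightarrow> j \<in> J \<Longrightarrow> x \<in> P i \<Longrightarrow> x \<in> P j \<Longrightarrow> i = j"
  unfolding is_partition_def by blast

lemma is_partition_disjoint_family:
  "is_partition V J P \<Longrightarrow> disjoint_family_on P J"
  unfolding is_partition_def disjoint_family_on_def by blast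

lemma card_pair_inter_part:
  assumes "is_partition V J P" "i \<in> J" "j \<in> J" "k \<in> J"
    and "x \<in> P i" "y \<in> P j" "x \<noteq> y"
  shows "card ({x, y} \<inter> P k) = of_bool (k = i) + of_bool (k = j)"
proof -
  have "x \<in> P k \<longleftrightarrow> k = i" "y \<in> P k \<longleftrightarrow> k = j"
    using is_partition_part_unique[OF assms(1)] assms(2-6) by blast+
  then show ?thesis
    using \<open>x \<noteq> y\<close> by (cases "k = i"; cases "k = j") (auto simp: Int_insert_left)
qed

lemma induced_iso_pair_edge:
  assumes "induced_iso E {a, b} {c, d}" "a \<noteq> b" "E a b" "E c d \<longleftrightarrow> E d c"
  shows "E c d"
proof -
  obtain f where f: "bij_betw f {a, b} {c, d}"
    and pres: "\<forall>x\<in>{a, b}. \<forall>y\<in>{a, b}. E x y \<longleftrightarrow> E (f x) (f y)"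
    using assms(1) unfolding induced_iso_def by blast
  have "f a \<noteq> f b"
    using bij_betw_imp_inj_on[OF f] \<open>a \<noteq> b\<close> by (auto dest: inj_onD)
  moreover have "f a \<in> {c, d}" "f b \<in> {c, d}"
    using bij_betw_apply[OF f] by auto
  moreover have "E (f a) (f b)"
    using pres \<open>E a b\<close> by blast
  ultimately show ?thesis
    using assms(4) by auto
qed

lemma monomorphic_edges_determined_by_parts:
  assumes "ugraph V E" "monomorphic_decomposition V E J P"
  shows "edges_determined_by_parts E J P"
  unfolding edges_determined_by_parts_def
proof (intro ballI impI)
  fix i j x x' y y'
  assume ij: "i \<in> J" "j \<in> J" and xy: "x \<in> P i" "x' \<in> P i" "y \<in> P j" "y' \<in> P j"
    and ne: "x \<noteq> y" "x' \<noteq> y'"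
  have part: "is_partition V J P"
    using assms(2) unfolding monomorphic_decomposition_def by blast
  have V: "x \<in> V" "x' \<in> V" "y \<in> V" "y' \<in> V"
    using is_partition_subset[OF part] ij xy by blast+
  have "\<forall>k\<in>J. card ({x, y} \<inter> P k) = card ({x', y'} \<inter> P k)"
    using card_pair_inter_part[OF part] ij xy ne by simp
  then have "induced_iso E {x, y} {x', y'}" "induced_iso E {x', y'} {x, y}"
    using assms(2) V unfolding monomorphic_decomposition_def
    by (metis finite.intros empty_subsetI insert_subset)+
  moreover have "E x y \<longleftrightarrow> E y x" "E x' y' \<longleftrightarrow> E y' x'"
    using assms(1) V unfolding ugraph_def by blast+
  ultimately show "E x y \<longleftrightarrow> E x' y'"
    using induced_iso_pair_edge ne by metis
qed

lemma edges_determined_by_parts_iff_lex_sum: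
  assumes "ugraph V E" "is_partition V J P"
  shows "edges_determined_by_parts E J P \<longleftrightarrow>
           (\<forall>j\<in>J. clique_or_independent E (P j)) \<and> (\<exists>H. is_lex_sum V E J P H)"
proof
  assume det: "edges_determined_by_parts E J P"
  have sym: "E x y \<Longrightarrow> E y x" and irr: "\<not> E x x" if "x \<in> V" "y \<in> V" for x y
    using assms(1) that unfolding ugraph_def by blast+
  have sub: "\<And>j. j \<in> J \<Longrightarrow> P j \<subseteq> V"
    using is_partition_subset[OF assms(2)] .
  have "clique_or_independent E (P j)" if j: "j \<in> J" for j
  proof (rule ccontr)
    assume "\<not> clique_or_independent E (P j)"
    then obtain a b c d where "a \<in> P j" "b \<in> P j" "a \<noteq> b" "\<not> E a b"
      and "c \<in> P j" "d \<in> P j" "E c d"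
      unfolding clique_or_independent_def by blast
    moreover have "c \<noteq> d"
      using irr sub[OF j] \<open>c \<in> P j\<close> \<open>E c d\<close> by blast
    ultimately show False
      using det j unfolding edges_determined_by_parts_def by metis
  qed
  moreover
  define H where "H i j \<longleftrightarrow> i \<noteq> j \<and> (\<exists>x\<in>P i. \<exists>y\<in>P j. E x y)" for i j
  have "is_lex_sum V E J P H"
    unfolding is_lex_sum_def ugraph_def
  proof (intro conjI ballI impI)
    fix i j assume "i \<in> J" "j \<in> J"
    then show "H i j \<longleftrightarrow> H j i"
      unfolding H_def using sym sub by blast
  next
    fix i j x y assume ij: "i \<in> J" "j \<in> J" "i \<noteq> j" and xy: "x \<in> P i" "y \<in> P j"
    have "x' \<noteq> y'" if "x' \<in> P i" "y' \<in> P j" for x' y'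
      using is_partition_part_unique[OF assms(2)] ij that by blast
    then show "E x y \<longleftrightarrow> H i j"
      using det ij xy unfolding H_def edges_determined_by_parts_def by metis
  qed (simp add: H_def)
  ultimately show "(\<forall>j\<in>J. clique_or_independent E (P j)) \<and> (\<exists>H. is_lex_sum V E J P H)"
    by blast
next
  assume "(\<forall>j\<in>J. clique_or_independent E (P j)) \<and> (\<exists>H. is_lex_sum V E J P H)"
  then obtain H where C: "\<forall>j\<in>J. clique_or_independent E (P j)"
    and L: "\<forall>i\<in>J. \<forall>j\<in>J. i \<noteq> j \<longrightarrow> (\<forall>x\<in>P i. \<forall>y\<in>P j. E x y \<longleftrightarrow> H i j)"
    unfolding is_lex_sum_def by blast
  show "edges_determined_by_parts E J P"
    unfolding edges_determined_by_parts_def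
  proof (intro ballI impI)
    fix i j x x' y y'
    assume "i \<in> J" "j \<in> J" "x \<in> P i" "x' \<in> P i" "y \<in> P j" "y' \<in> P j" "x \<noteq> y" "x' \<noteq> y'"
    then show "E x y \<longleftrightarrow> E x' y'"
      using C L unfolding clique_or_independent_def by (cases "i = j") blast+
  qed
qed

lemma partition_profile_bij:
  assumes part: "is_partition V J P" and F: "finite F" "F \<subseteq> V" and F': "finite F'" "F' \<subseteq> V"
    and profile: "\<forall>j\<in>J. card (F \<inter> P j) = card (F' \<inter> P j)"
  obtains f where "bij_betw f F F'" "\<And>j x. j \<in> J \<Longrightarrow> x \<in> F \<inter> P j \<Longrightarrow> f x \<in> P j"
proof -
  have "\<forall>j\<in>J. \<exists>h. bij_betw h (F \<inter> P j) (F' \<inter> P j)"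
    using profile F F' by (auto intro: finite_same_card_bij)
  then obtain g where g: "\<And>j. j \<in> J \<Longrightarrow> bij_betw (g j) (F \<inter> P j) (F' \<inter> P j)"
    by metis
  define part_of where "part_of x = (SOME j. j \<in> J \<and> x \<in> P j)" for x
  have part_of: "part_of x = j" if "j \<in> J" "x \<in> P j" for x j
    unfolding part_of_def
    using someI[of "\<lambda>j. j \<in> J \<and> x \<in> P j"] is_partition_part_unique[OF part] that by blast
  define f where "f x = g (part_of x) x" for x
  have "bij_betw f (F \<inter> P j) (F' \<inter> P j)" if "j \<in> J" for j
    using g[OF that] part_of[OF that] by (auto simp: f_def intro: bij_betw_cong[THEN iffD1])
  then have "bij_betw f (\<Union>j\<in>J. F \<inter> P j) (\<Union>j\<in>J. F' \<inter> P j)"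
    using is_partition_disjoint_family[OF part]
    by (intro bij_betw_UNION_disjoint) (auto simp: disjoint_family_on_def)
  moreover have "(\<Union>j\<in>J. G \<inter> P j) = G" if "G \<subseteq> V" for G
    using part that unfolding is_partition_def by blast
  ultimately have "bij_betw f F F'"
    using F F' by simp
  moreover have "f x \<in> P j" if "j \<in> J" "x \<in> F \<inter> P j" for j x
    using g[OF that(1)] part_of[OF that(1)] that(2) by (auto simp: f_def bij_betw_def)
  ultimately show thesis
    using that by blast
qed

lemma edges_determined_by_parts_monomorphic:
  assumes "ugraph V E" "is_partition V J P" "edges_determined_by_parts E J P"
  shows "monomorphic_decomposition V E J P"
  unfolding monomorphic_decomposition_def
proof (intro conjI allI impI assms(2))
  fix F F'
  assume "finite F \<and> finite F' \<and> F \<subseteq> V \<and> F' \<subseteq> V \<and>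
    (\<forall>j\<in>J. card (F \<inter> P j) = card (F' \<inter> P j))"
  then obtain f where f: "bij_betw f F F'"
    and f_part: "\<And>j x. j \<in> J \<Longrightarrow> x \<in> F \<inter> P j \<Longrightarrow> f x \<in> P j" and "F \<subseteq> V" "F' \<subseteq> V"
    using partition_profile_bij[OF assms(2)] by metis
  have "E x y \<longleftrightarrow> E (f x) (f y)" if xy: "x \<in> F" "y \<in> F" for x y
  proof (cases "x = y")
    case True
    moreover have "x \<in> V" "f x \<in> V"
      using xy bij_betw_apply[OF f] \<open>F \<subseteq> V\<close> \<open>F' \<subseteq> V\<close> by blast+
    ultimately show ?thesis
      using assms(1) unfolding ugraph_def by blast
  next
    case False
    then have "f x \<noteq> f y"
      using bij_betw_imp_inj_on[OF f] xy by (auto dest: inj_onD)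
    obtain i j where ij: "i \<in> J" "j \<in> J" "x \<in> P i" "y \<in> P j"
      using assms(2) xy \<open>F \<subseteq> V\<close> unfolding is_partition_def by blast
    then have "f x \<in> P i" "f y \<in> P j"
      using f_part xy by blast+
    then show ?thesis
      using assms(3) ij \<open>x \<noteq> y\<close> \<open>f x \<noteq> f y\<close>
      unfolding edges_determined_by_parts_def by blast
  qed
  with f show "induced_iso E F F'"
    unfolding induced_iso_def by blast
qed

lemma monomorphic_decomposition_iff_lex_sum:
  assumes "ugraph V E" "is_partition V J P"
  shows "monomorphic_decomposition V E J P \<longleftrightarrow>
           (\<forall>j\<in>J. clique_or_independent E (P j)) \<and> (\<exists>H. is_lex_sum V E J P H)"
  using monomorphic_edges_determined_by_parts[OF assms(1)]
    edges_determined_by_parts_monomorphic[OF assms]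
    edges_determined_by_parts_iff_lex_sum[OF assms]
  by blast

theorem mainTheorem20:
  fixes V :: "'a set" and E :: "'a \<Rightarrow> 'a \<Rightarrow> bool"
    and J :: "'j set" and P :: "'j \<Rightarrow> 'a set"
  assumes "ugraph V E"
  shows "(is_partition V J P \<longrightarrow>
            (monomorphic_decomposition V E J P \<longleftrightarrow>
              (\<forall>j\<in>J. clique_or_independent E (P j)) \<and> (\<exists>H. is_lex_sum V E J P H)))
       \<and> ((\<exists>(n::nat) Q. monomorphic_decomposition V E {..<n} Q) \<longleftrightarrow>
          (\<exists>(n::nat) Q H. is_partition V {..<n} Q \<and>
              (\<forall>j<n. clique_or_independent E (Q j)) \<and> is_lex_sum V E {..<n} Q H))"
proof (intro conjI impI)
  show "monomorphic_decomposition V E J P \<longleftrightarrow>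
          (\<forall>j\<in>J. clique_or_independent E (P j)) \<and> (\<exists>H. is_lex_sum V E J P H)"
    if "is_partition V J P"
    using monomorphic_decomposition_iff_lex_sum[OF assms that] .
  have "is_partition V {..<n} Q" if "monomorphic_decomposition V E {..<n} Q" for n :: nat and Q
    using that unfolding monomorphic_decomposition_def by blast
  then show "(\<exists>(n::nat) Q. monomorphic_decomposition V E {..<n} Q) \<longleftrightarrow>
          (\<exists>(n::nat) Q H. is_partition V {..<n} Q \<and>
              (\<forall>j<n. clique_or_independent E (Q j)) \<and> is_lex_sum V E {..<n} Q H)"
    using monomorphic_decomposition_iff_lex_sum[OF assms] by (metis lessThan_iff)
qed

end
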